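(* Let $A\in\mathbb{R}^{n\times n}$ be symmetric. Let $V_N=[v_1,\ldots,v_N]\in\mathbb{R}^{n\times M}$, where each block vector $v_j$ has $n$ rows, and let $T_N\in\mathbb{R}^{M\times M}$ be a symmetric block tridiagonal matrix (with diagonal blocks $\alpha_j$, subdiagonal blocks $\beta_{j}$ and superdiagonal blocks $\beta_j^T$) such that the perturbed block Lanczos recurrence \[ AV_N=V_NT_N+\left[\Delta v_1,\ldots,\Delta v_{k-1},\Delta\widetilde v_k,\ldots,\Delta\widetilde v_N\right] \] holds (i.e. the recurrence terminates with $\beta_{N+1}=0$), where each perturbation block $\Delta v_j$, $\Delta \widetilde v_j$ has the same size as $v_j$, and \[ \max\left(\|\Delta v_1\|,\ldots,\|\Delta v_{k-1}\|,\|\Delta\widetilde v_k\|,\ldots,\|\Delta\widetilde v_N\|\right)\le\epsilon_2\|A\| \] for some $\epsilon_2>0$. Let $T_N=S_N\Theta_NS_N^T$ be a spectral decomposition with $S_N^TS_N=I$, $S_N=[s_1^{(N)},\ldots,s_M^{(N)}]$, $\Theta_N=\mathrm{diag}(\theta_1^{(N)},\ldots,\theta_M^{(N)})$, and define the Ritz vectors $z_i^{(N)}=V_Ns_i^{(N)}$. Suppose $\epsilon_1>0$ (independent of $i,j$) is such that for every Ritz pair $(\theta_i^{(N)},z_i^{(N)})$ with $\|z_i^{(N)}\|<0.5$ there exists a Ritz pair $(\theta_j^{(N)},z_j^{(N)})$ with \[ \|z_j^{(N)}\|\ge 0.5\quad\text{and}\quad|\theta_i^{(N)}-\theta_j^{(N)}|\le\epsilon_1\|A\|.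 \] Then each eigenvalue of $T_N$ lies within $3\max\left(\sqrt{N}\epsilon_2,\epsilon_1\right)\|A\|$ of an eigenvalue of $A$.
   Context: All norms are spectral (2-)norms. A "block vector" is an $n\times p_j$ matrix; $I_p$ and $0_p$ denote the $p\times p$ identity and zero matrices. *)

theory Defs
  imports "Jordan_Normal_Form.Char_Poly"
begin

definition vnorm :: "real vec \<Rightarrow> real" where
  "vnorm v = sqrt (\<Sum>i<dim_vec v. (v $ i)^2)"

definition spec_norm :: "real mat \<Rightarrow> real" where
  "spec_norm B = Sup {vnorm (B *\<^sub>v x) | x. x \<in> carrier_vec (dim_col B) \<and> vnorm x \<le> 1}"

(* column offset of block j, block sizes p 0, p 1, ... *)
definition blk_off :: "(nat \<Rightarrow> nat) \<Rightarrow> nat \<Rightarrow> nat" where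
  "blk_off p j = (\<Sum>l<j. p l)"

definition blk_idx :: "(nat \<Rightarrow> nat) \<Rightarrow> nat \<Rightarrow> nat" where
  "blk_idx p c = (LEAST j. c < blk_off p (Suc j))"

(* horizontal concatenation [D 0, ..., D (N-1)] of n x p_j blocks *)
definition blk_concat :: "nat \<Rightarrow> (nat \<Rightarrow> nat) \<Rightarrow> nat \<Rightarrow> (nat \<Rightarrow> real mat) \<Rightarrow> real mat" where
  "blk_concat n p N D = mat n (blk_off p N)
     (\<lambda>(r, c). D (blk_idx p c) $$ (r, c - blk_off p (blk_idx p c)))"

definition block_tridiag :: "(nat \<Rightarrow> nat) \<Rightarrow> nat \<Rightarrow> real mat \<Rightarrow> bool" where
  "block_tridiag p N T \<longleftrightarrow>
     (\<forall>r < blk_off p N. \<forall>c < blk_off p N.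
        blk_idx p c + 1 < blk_idx p r \<or> blk_idx p r + 1 < blk_idx p c \<longrightarrow> T $$ (r, c) = 0)"

end

theory Submission
  imports Defs "HOL-Analysis.Function_Topology" "HOL-Analysis.L2_Norm"
begin

(* A Ritz pair (theta_j, z_j = V s_j) has residual A z_j - theta_j z_j = E s_j, where the
   perturbation E = [Dv_1, ..., Dv_N] has norm at most sqrt N * eps2 * ||A|| because its blocks
   act on disjoint blocks of s_j. For symmetric A and any t, a unit vector minimising
   ||(A - t I) x|| yields an eigenvalue lam of A with |lam - t| equal to that minimum, so
   |lam - theta_j| * ||z_j|| <= ||E s_j||: Ritz values with ||z_j|| >= 1/2 lie within
   2 sqrt N eps2 ||A|| of the spectrum of A. Every eigenvalue of T is a Ritz value, and those
   with short Ritz vectors are within eps1 ||A|| of one with a long Ritz vector. *)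

lemma vnorm_L2_set: "vnorm v = L2_set (\<lambda>i. v $ i) {..<dim_vec v}"
  unfolding vnorm_def L2_set_def by simp

lemma vnorm_nonneg [simp]: "0 \<le> vnorm v"
  unfolding vnorm_L2_set by simp

lemma vnorm_zero_vec [simp]: "vnorm (0\<^sub>v n) = 0"
  by (simp add: vnorm_def)

lemma vnorm_vec: "vnorm (vec n g) = sqrt (\<Sum>i<n. (g i)\<^sup>2)"
  unfolding vnorm_def by simp

lemma vnorm_square: "(vnorm v)\<^sup>2 = v \<bullet> v"
  unfolding vnorm_def scalar_prod_def
  by (simp add: sum_nonneg power2_eq_square atLeast0LessThan)

lemma vnorm_eq_0_iff:
  assumes "v \<in> carrier_vec n"
  shows "vnorm v = 0 \<longleftrightarrow> v = 0\<^sub>v n"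
proof -
  have "vnorm v = 0 \<longleftrightarrow> (\<forall>i<n. v $ i = 0)"
    unfolding vnorm_L2_set using assms by (auto simp: L2_set_eq_0_iff)
  also have "\<dots> \<longleftrightarrow> v = 0\<^sub>v n"
    using assms by (auto simp: vec_eq_iff)
  finally show ?thesis .
qed

lemma vnorm_smult [simp]: "vnorm (a \<cdot>\<^sub>v v) = \<bar>a\<bar> * vnorm v"
proof -
  have "(\<Sum>i<dim_vec v. ((a \<cdot>\<^sub>v v) $ i)\<^sup>2) = a\<^sup>2 * (\<Sum>i<dim_vec v. (v $ i)\<^sup>2)"
    by (simp add: sum_distrib_left power_mult_distrib)
  then show ?thesis
    unfolding vnorm_def by (simp add: real_sqrt_mult)
qed

lemma abs_index_le_vnorm:
  assumes "i < dim_vec v"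
  shows "\<bar>v $ i\<bar> \<le> vnorm v"
  unfolding vnorm_L2_set using member_le_L2_set[of "{..<dim_vec v}" i "\<lambda>i. \<bar>v $ i\<bar>"] assms
  by (simp add: L2_set_def)

lemma vnorm_mult_mat_vec_le_abs_sum:
  assumes "x \<in> carrier_vec (dim_col B)" "vnorm x \<le> 1"
  shows "vnorm (B *\<^sub>v x) \<le> (\<Sum>r<dim_row B. \<Sum>c<dim_col B. \<bar>B $$ (r, c)\<bar>)"
proof -
  have "\<bar>(B *\<^sub>v x) $ r\<bar> \<le> (\<Sum>c<dim_col B. \<bar>B $$ (r, c)\<bar>)" if "r < dim_row B" for r
  proof -
    have "\<bar>(B *\<^sub>v x) $ r\<bar> = \<bar>\<Sum>c<dim_col B. B $$ (r, c) * x $ c\<bar>"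
      using that assms by (simp add: scalar_prod_def atLeast0LessThan)
    also have "\<dots> \<le> (\<Sum>c<dim_col B. \<bar>B $$ (r, c)\<bar> * \<bar>x $ c\<bar>)"
      unfolding abs_mult[symmetric] by (rule sum_abs)
    also have "\<dots> \<le> (\<Sum>c<dim_col B. \<bar>B $$ (r, c)\<bar>)"
      using assms by (intro sum_mono mult_left_le) (auto intro: order_trans[OF abs_index_le_vnorm])
    finally show ?thesis .
  qed
  then have "(\<Sum>r<dim_row B. \<bar>(B *\<^sub>v x) $ r\<bar>) \<le> (\<Sum>r<dim_row B. \<Sum>c<dim_col B. \<bar>B $$ (r, c)\<bar>)"
    by (intro sum_mono) simp
  then show ?thesis
    using L2_set_le_sum_abs[of "\<lambda>r. (B *\<^sub>v x) $ r" "{..<dim_row B}"]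
    unfolding vnorm_L2_set by simp
qed

lemma spec_norm_upper:
  assumes "x \<in> carrier_vec (dim_col B)" "vnorm x \<le> 1"
  shows "vnorm (B *\<^sub>v x) \<le> spec_norm B"
  unfolding spec_norm_def
proof (rule cSup_upper)
  show "bdd_above {vnorm (B *\<^sub>v x) | x. x \<in> carrier_vec (dim_col B) \<and> vnorm x \<le> 1}"
    using vnorm_mult_mat_vec_le_abs_sum[of _ B] unfolding bdd_above_def by blast
qed (use assms in blast)

lemma spec_norm_nonneg: "0 \<le> spec_norm B"
proof -
  have "vnorm (B *\<^sub>v 0\<^sub>v (dim_col B)) \<le> spec_norm B"
    by (rule spec_norm_upper) auto
  then show ?thesis
    using vnorm_nonneg order_trans by blast
qed

lemma vnorm_mult_mat_vec_normalize:
  assumes "x \<in> carrier_vec (dim_col B)" "vnorm x > 0"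
  shows "vnorm (B *\<^sub>v x) = vnorm x * vnorm (B *\<^sub>v ((1 / vnorm x) \<cdot>\<^sub>v x))"
  using assms by (simp add: mult_mat_vec[of B "dim_row B" "dim_col B"])

lemma vnorm_mult_mat_vec_le:
  assumes x: "x \<in> carrier_vec (dim_col B)"
  shows "vnorm (B *\<^sub>v x) \<le> spec_norm B * vnorm x"
proof (cases "vnorm x = 0")
  case True
  then have "B *\<^sub>v x = 0\<^sub>v (dim_row B)"
    using x by (auto simp: vnorm_eq_0_iff[OF x] scalar_prod_def)
  then show ?thesis
    using True by simp
next
  case False
  then have "vnorm x > 0"
    using vnorm_nonneg[of x] by linarith
  moreover have "vnorm (B *\<^sub>v ((1 / vnorm x) \<cdot>\<^sub>v x)) \<le> spec_norm B"
    using x \<open>vnorm x > 0\<close> by (intro spec_norm_upper) auto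
  ultimately show ?thesis
    using vnorm_mult_mat_vec_normalize[OF x] by (simp add: mult.commute)
qed

lemma spec_norm_le:
  assumes "\<And>x. x \<in> carrier_vec (dim_col B) \<Longrightarrow> vnorm x \<le> 1 \<Longrightarrow> vnorm (B *\<^sub>v x) \<le> c"
  shows "spec_norm B \<le> c"
  unfolding spec_norm_def
proof (rule cSup_least)
  show "{vnorm (B *\<^sub>v x) | x. x \<in> carrier_vec (dim_col B) \<and> vnorm x \<le> 1} \<noteq> {}"
    using zero_carrier_vec vnorm_zero_vec by fastforce
qed (use assms in blast)

lemma unit_sphere_attains_min:
  fixes f :: "real vec \<Rightarrow> real"
  assumes "n > 0" and cont: "continuous_on UNIV (\<lambda>g. f (vec n g))"
  obtains x0 where "x0 \<in> carrier_vec n" "vnorm x0 = 1"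
    "\<And>x. x \<in> carrier_vec n \<Longrightarrow> vnorm x = 1 \<Longrightarrow> f x0 \<le> f x"
proof -
  define K where "K = Pi UNIV (\<lambda>_::nat. {-1..1::real}) \<inter> {g. (\<Sum>i<n. (g i)\<^sup>2) = 1}"
  have "compactin (product_topology (\<lambda>_::nat. euclidean) UNIV) (PiE UNIV (\<lambda>_. {-1..1::real}))"
    by (subst compactin_PiE) simp
  then have "compact (Pi UNIV (\<lambda>_::nat. {-1..1::real}))"
    by (simp add: euclidean_product_topology PiE_UNIV_domain)
  moreover have "closed {g::nat \<Rightarrow> real. (\<Sum>i<n. (g i)\<^sup>2) = 1}"
    by (intro closed_Collect_eq continuous_intros continuous_on_product_coordinates)
  ultimately have "compact K"
    unfolding K_def by blast
  moreover have "(\<lambda>i. if i = 0 then 1 else 0) \<in> K"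
  proof -
    have "(\<Sum>i<n. (if i = 0 then 1 else 0 :: real)\<^sup>2) = (\<Sum>i<n. if i = 0 then 1 else 0)"
      by (rule sum.cong) auto
    then show ?thesis
      using \<open>n > 0\<close> unfolding K_def by auto
  qed
  ultimately obtain g0 where g0: "g0 \<in> K" and min: "\<And>g. g \<in> K \<Longrightarrow> f (vec n g0) \<le> f (vec n g)"
    using continuous_attains_inf[of K "\<lambda>g. f (vec n g)"] continuous_on_subset[OF cont]
    by blast
  show thesis
  proof
    show "vec n g0 \<in> carrier_vec n" "vnorm (vec n g0) = 1"
      using g0 by (auto simp: K_def vnorm_vec)
  next
    fix x assume x: "x \<in> carrier_vec n" "vnorm x = 1"
    define g where "g i = (if i < n then x $ i else 0)" for i
    have "vec n g = x"
      using x by (auto simp: g_def)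
    moreover have "g \<in> K"
      using x abs_index_le_vnorm[of _ x] unfolding K_def g_def
      by (auto simp: abs_le_iff vnorm_def)
    ultimately show "f (vec n g0) \<le> f x"
      using min by metis
  qed
qed

lemma continuous_on_vnorm_mult_mat_vec:
  assumes "B \<in> carrier_mat m n"
  shows "continuous_on UNIV (\<lambda>g. vnorm (B *\<^sub>v vec n g))"
proof -
  have "vnorm (B *\<^sub>v vec n g) = sqrt (\<Sum>r<m. (\<Sum>c<n. B $$ (r, c) * g c)\<^sup>2)" for g
    using assms by (simp add: vnorm_def scalar_prod_def atLeast0LessThan)
  then show ?thesis
    by (simp only:) (intro continuous_intros continuous_on_product_coordinates)
qed

lemma vnorm_mult_mat_vec_ge_homogeneous:
  assumes B: "B \<in> carrier_mat m n" and w: "w \<in> carrier_vec n"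
    and unit: "\<And>x. x \<in> carrier_vec n \<Longrightarrow> vnorm x = 1 \<Longrightarrow> c \<le> vnorm (B *\<^sub>v x)"
  shows "c * vnorm w \<le> vnorm (B *\<^sub>v w)"
proof (cases "vnorm w = 0")
  case False
  then have "vnorm w > 0"
    using vnorm_nonneg[of w] by linarith
  moreover have "c \<le> vnorm (B *\<^sub>v ((1 / vnorm w) \<cdot>\<^sub>v w))"
    using w \<open>vnorm w > 0\<close> by (intro unit) auto
  ultimately show ?thesis
    using vnorm_mult_mat_vec_normalize[of w B] B w by (simp add: mult.commute)
qed simp

lemma vnorm_add_smult_square:
  assumes "u \<in> carrier_vec n" "v \<in> carrier_vec n"
  shows "(vnorm (u + t \<cdot>\<^sub>v v))\<^sup>2 = u \<bullet> u + 2 * t * (u \<bullet> v) + t\<^sup>2 * (v \<bullet> v)"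
  unfolding vnorm_square using assms
  by (simp add: scalar_prod_def sum.distrib sum_distrib_left algebra_simps power2_eq_square)

lemma linear_coeff_eq_0_if_quadratic_nonneg:
  fixes a b :: real
  assumes "\<And>t. 0 \<le> 2 * t * a + t\<^sup>2 * b"
  shows "a = 0"
proof -
  define c where "c = \<bar>b\<bar> + 1"
  have "c > 0" "b - 2 * c < 0"
    unfolding c_def by (auto simp: abs_if)
  have "0 \<le> (2 * (- a / c) * a + (- a / c)\<^sup>2 * b) * c\<^sup>2"
    using assms[of "- a / c"] by simp
  also have "\<dots> = a\<^sup>2 * (b - 2 * c)"
    using \<open>c > 0\<close> by (simp add: field_simps power2_eq_square)
  finally have "a\<^sup>2 \<le> 0"
    using \<open>b - 2 * c < 0\<close> by (simp add: zero_le_mult_iff)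
  then show ?thesis by simp
qed

text \<open>The normal equation \<open>B\<^sup>T B x\<^sub>0 = \<parallel>B x\<^sub>0\<parallel>\<^sup>2 x\<^sub>0\<close> of the minimisation, in weak form.\<close>
lemma min_vnorm_mult_mat_vec_normal_eq:
  assumes B: "B \<in> carrier_mat m n" and x0: "x0 \<in> carrier_vec n" "vnorm x0 = 1"
    and min: "\<And>w. w \<in> carrier_vec n \<Longrightarrow> vnorm (B *\<^sub>v x0) * vnorm w \<le> vnorm (B *\<^sub>v w)"
    and y: "y \<in> carrier_vec n"
  shows "(B *\<^sub>v x0) \<bullet> (B *\<^sub>v y) = (vnorm (B *\<^sub>v x0))\<^sup>2 * (x0 \<bullet> y)"
proof -
  define s where "s = vnorm (B *\<^sub>v x0)"
  have "0 \<le> 2 * t * ((B *\<^sub>v x0) \<bullet> (B *\<^sub>v y) - s\<^sup>2 * (x0 \<bullet> y))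
      + t\<^sup>2 * ((B *\<^sub>v y) \<bullet> (B *\<^sub>v y) - s\<^sup>2 * (y \<bullet> y))" for t
  proof -
    have "(s * vnorm (x0 + t \<cdot>\<^sub>v y))\<^sup>2 \<le> (vnorm (B *\<^sub>v (x0 + t \<cdot>\<^sub>v y)))\<^sup>2"
      unfolding s_def using x0 y by (intro power_mono min) auto
    also have "B *\<^sub>v (x0 + t \<cdot>\<^sub>v y) = B *\<^sub>v x0 + t \<cdot>\<^sub>v (B *\<^sub>v y)"
      using B x0 y by (simp add: mult_add_distrib_mat_vec mult_mat_vec)
    finally have "s\<^sup>2 * (x0 \<bullet> x0 + 2 * t * (x0 \<bullet> y) + t\<^sup>2 * (y \<bullet> y))
        \<le> (B *\<^sub>v x0) \<bullet> (B *\<^sub>v x0) + 2 * t * ((B *\<^sub>v x0) \<bullet> (B *\<^sub>v y)) + t\<^sup>2 * ((B *\<^sub>v y) \<bullet> (B *\<^sub>v y))"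
      using B x0 y by (simp add: power_mult_distrib vnorm_add_smult_square[of _ n] vnorm_add_smult_square[of _ m])
    moreover have "x0 \<bullet> x0 = 1" "(B *\<^sub>v x0) \<bullet> (B *\<^sub>v x0) = s\<^sup>2"
      using x0 by (simp_all add: s_def flip: vnorm_square)
    ultimately show ?thesis
      by (simp add: algebra_simps)
  qed
  then show ?thesis
    unfolding s_def using linear_coeff_eq_0_if_quadratic_nonneg by fastforce
qed

lemma eigenvalue_if_square_eigenvector:
  fixes B :: "real mat"
  assumes B: "B \<in> carrier_mat n n" and x: "x \<in> carrier_vec n" "x \<noteq> 0\<^sub>v n"
    and sq: "B *\<^sub>v (B *\<^sub>v x) = s\<^sup>2 \<cdot>\<^sub>v x"
  shows "eigenvalue B s \<or> eigenvalue B (- s)"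
proof -
  define u where "u = B *\<^sub>v x + s \<cdot>\<^sub>v x"
  show ?thesis
  proof (cases "u = 0\<^sub>v n")
    case True
    then have "B *\<^sub>v x = (- s) \<cdot>\<^sub>v x"
      using B x by (auto simp: u_def vec_eq_iff)
    then have "eigenvector B x (- s)"
      using B x unfolding eigenvector_def by auto
    then show ?thesis
      unfolding eigenvalue_def by blast
  next
    case False
    have "B *\<^sub>v u = s \<cdot>\<^sub>v u"
      using B x sq by (auto simp: u_def mult_add_distrib_mat_vec mult_mat_vec vec_eq_iff
          algebra_simps power2_eq_square)
    then have "eigenvector B u s"
      using B x False unfolding eigenvector_def u_def by auto
    then show ?thesis
      unfolding eigenvalue_def by blast
  qed
qed

text \<open>The norm of \<open>B x\<close> is minimised at a unit vector \<open>x\<^sub>0\<close>; by the normal equation and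
  symmetry, \<open>B\<^sup>2 x\<^sub>0 = \<parallel>B x\<^sub>0\<parallel>\<^sup>2 x\<^sub>0\<close>, so \<open>\<plusminus>\<parallel>B x\<^sub>0\<parallel>\<close> is an eigenvalue of \<open>B\<close>.\<close>
lemma symmetric_exists_eigenvalue_abs_le:
  fixes B :: "real mat"
  assumes B: "B \<in> carrier_mat n n" "transpose_mat B = B"
    and z: "z \<in> carrier_vec n" "z \<noteq> 0\<^sub>v n"
  shows "\<exists>lam. eigenvalue B lam \<and> \<bar>lam\<bar> * vnorm z \<le> vnorm (B *\<^sub>v z)"
proof -
  have "n > 0"
    using z by (auto simp: vec_eq_iff)
  then obtain x0 where x0: "x0 \<in> carrier_vec n" "vnorm x0 = 1"
    and min: "\<And>x. x \<in> carrier_vec n \<Longrightarrow> vnorm x = 1 \<Longrightarrow> vnorm (B *\<^sub>v x0) \<le> vnorm (B *\<^sub>v x)"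
    using unit_sphere_attains_min[where f = "\<lambda>x. vnorm (B *\<^sub>v x)"]
      continuous_on_vnorm_mult_mat_vec[OF B(1)] by blast
  define s where "s = vnorm (B *\<^sub>v x0)"
  have lower: "s * vnorm w \<le> vnorm (B *\<^sub>v w)" if "w \<in> carrier_vec n" for w
    unfolding s_def using B(1) that min by (rule vnorm_mult_mat_vec_ge_homogeneous)
  have "B *\<^sub>v (B *\<^sub>v x0) = s\<^sup>2 \<cdot>\<^sub>v x0"
  proof -
    define d where "d = B *\<^sub>v (B *\<^sub>v x0) - s\<^sup>2 \<cdot>\<^sub>v x0"
    have d: "d \<in> carrier_vec n"
      unfolding d_def using B x0 by simp
    have "(B *\<^sub>v (B *\<^sub>v x0)) \<bullet> d = (B *\<^sub>v x0) \<bullet> (B *\<^sub>v d)"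
      using transpose_vec_mult_scalar[OF B(1) d, of "B *\<^sub>v x0"] B x0 by simp
    also have "\<dots> = s\<^sup>2 * (x0 \<bullet> d)"
      unfolding s_def using B(1) x0 lower d by (intro min_vnorm_mult_mat_vec_normal_eq) (auto simp: s_def)
    finally have "d \<bullet> d = 0"
      using B x0 d by (simp add: d_def minus_scalar_prod_distrib[of _ n])
    then have "d = 0\<^sub>v n"
      using vnorm_eq_0_iff[OF d] by (simp flip: vnorm_square)
    then show ?thesis
      using B x0 by (auto simp: d_def vec_eq_iff)
  qed
  moreover have "x0 \<noteq> 0\<^sub>v n"
    using x0 by auto
  ultimately have "eigenvalue B s \<or> eigenvalue B (- s)"
    using B(1) x0(1) by (intro eigenvalue_if_square_eigenvector)
  moreover have "\<bar>s\<bar> = s" "\<bar>- s\<bar> = s"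
    by (simp_all add: s_def)
  ultimately show ?thesis
    using lower[OF z(1)] by metis
qed

lemma symmetric_exists_eigenvalue_near:
  fixes A :: "real mat"
  assumes A: "A \<in> carrier_mat n n" "transpose_mat A = A"
    and z: "z \<in> carrier_vec n" "z \<noteq> 0\<^sub>v n"
  shows "\<exists>lam. eigenvalue A lam \<and> \<bar>lam - t\<bar> * vnorm z \<le> vnorm (A *\<^sub>v z - t \<cdot>\<^sub>v z)"
proof -
  define B where "B = char_matrix A t"
  have "A $$ (j, i) = A $$ (i, j)" if "i < n" "j < n" for i j
    using arg_cong[OF A(2), of "\<lambda>M. M $$ (i, j)"] A(1) that by simp
  then have B: "B \<in> carrier_mat n n" "transpose_mat B = B"
    using A by (auto simp: B_def char_matrix_def intro!: eq_matI)
  have "B *\<^sub>v z = A *\<^sub>v z - t \<cdot>\<^sub>v z"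
  proof (rule eq_vecI)
    fix i assume "i < dim_vec (A *\<^sub>v z - t \<cdot>\<^sub>v z)"
    then have i: "i < n"
      using z by simp
    have "row B i = row A i + (- t) \<cdot>\<^sub>v unit_vec n i"
      using A i by (simp add: B_def char_matrix_def)
    then show "(B *\<^sub>v z) $ i = (A *\<^sub>v z - t \<cdot>\<^sub>v z) $ i"
      using A z i B by (simp add: add_scalar_prod_distrib[of _ n])
  qed (use B z in simp)
  moreover have "eigenvalue A (lam + t)" if "eigenvalue B lam" for lam
  proof -
    have "char_matrix B lam = char_matrix A (lam + t)"
      using A by (auto simp: B_def char_matrix_def intro!: eq_matI)
    then show ?thesis
      using that eigenvalue_det[OF A(1)] eigenvalue_det[OF B(1)] by simp
  qed
  ultimately show ?thesis
    using symmetric_exists_eigenvalue_abs_le[OF B z] by (metis add_diff_cancel_right')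
qed

lemma orthogonal_diag_conj_mult_col:
  fixes S T :: "real mat"
  assumes S: "S \<in> carrier_mat M M" "transpose_mat S * S = 1\<^sub>m M"
    and T: "T = S * mat M M (\<lambda>(i, j). if i = j then \<theta> i else 0) * transpose_mat S"
    and j: "j < M"
  shows "T *\<^sub>v col S j = \<theta> j \<cdot>\<^sub>v col S j"
proof -
  define \<Theta> where "\<Theta> = mat M M (\<lambda>(i, j). if i = j then \<theta> i else 0)"
  have \<Theta>: "\<Theta> \<in> carrier_mat M M"
    by (simp add: \<Theta>_def)
  have "T * S = S * \<Theta> * (transpose_mat S * S)"
    unfolding T \<Theta>_def[symmetric] using S \<Theta> by (intro assoc_mult_mat[of _ M M]) auto
  then have TS: "T * S = S * \<Theta>"
    using S \<Theta> by simp
  have "T \<in> carrier_mat M M"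
    using S \<Theta> unfolding T \<Theta>_def[symmetric] by simp
  then have "T *\<^sub>v col S j = col (T * S) j"
    by (rule col_mult2[symmetric]) (use S j in auto)
  also have "\<dots> = S *\<^sub>v col \<Theta> j"
    unfolding TS by (rule col_mult2) (use S \<Theta> j in auto)
  also have "col \<Theta> j = \<theta> j \<cdot>\<^sub>v unit_vec M j"
    using j by (auto simp: \<Theta>_def)
  also have "S *\<^sub>v (\<theta> j \<cdot>\<^sub>v unit_vec M j) = \<theta> j \<cdot>\<^sub>v (S *\<^sub>v unit_vec M j)"
    using S j by (simp add: mult_mat_vec)
  also have "S *\<^sub>v unit_vec M j = col S j"
    using S j by (auto intro!: eq_vecI)
  finally show ?thesis .
qed

lemma orthogonal_diag_conj_eigenvalue:
  fixes S T :: "real mat"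
  assumes S: "S \<in> carrier_mat M M" "transpose_mat S * S = 1\<^sub>m M"
    and T: "T = S * mat M M (\<lambda>(i, j). if i = j then \<theta> i else 0) * transpose_mat S"
    and ev: "eigenvalue T \<mu>"
  shows "\<exists>i<M. \<mu> = \<theta> i"
proof -
  define \<Theta> where "\<Theta> = mat M M (\<lambda>(i, j). if i = j then \<theta> i else 0)"
  have \<Theta>: "\<Theta> \<in> carrier_mat M M" "upper_triangular \<Theta>"
    by (auto simp: \<Theta>_def upper_triangular_def)
  have "S * transpose_mat S = 1\<^sub>m M"
    using mat_mult_left_right_inverse[of "transpose_mat S" M S] S by simp
  then have "similar_mat T \<Theta>"
    using S \<Theta> unfolding T \<Theta>_def[symmetric]
    by (intro similar_matI[where P = S and Q = "transpose_mat S" and n = M]) auto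
  moreover have "T \<in> carrier_mat M M"
    using S \<Theta> unfolding T \<Theta>_def[symmetric] by simp
  ultimately have "poly (char_poly \<Theta>) \<mu> = 0"
    using ev eigenvalue_root_char_poly char_poly_similar by metis
  then have "poly (\<Prod>a\<leftarrow>diag_mat \<Theta>. [:- a, 1:]) \<mu> = 0"
    using char_poly_upper_triangular[OF \<Theta>] by simp
  then show ?thesis
    by (auto simp: poly_prod_list prod_list_zero_iff diag_mat_def \<Theta>_def)
qed

lemma vnorm_col_orthogonal:
  fixes S :: "real mat"
  assumes S: "S \<in> carrier_mat M M" "transpose_mat S * S = 1\<^sub>m M" and j: "j < M"
  shows "vnorm (col S j) = 1"
proof -
  have "(transpose_mat S * S) $$ (j, j) = row (transpose_mat S) j \<bullet> col S j"
    using S j by (intro index_mult_mat(1)) auto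
  then have "(vnorm (col S j))\<^sup>2 = 1\<^sup>2"
    using S j by (simp add: vnorm_square)
  then show ?thesis
    by (rule power2_eq_imp_eq) simp_all
qed

lemma eigenvalue_near_ritz_value:
  fixes A V T E :: "real mat"
  assumes A: "A \<in> carrier_mat n n" "transpose_mat A = A"
    and V: "V \<in> carrier_mat n M" and T: "T \<in> carrier_mat M M" and E: "E \<in> carrier_mat n M"
    and rec: "A * V = V * T + E"
    and s: "s \<in> carrier_vec M" "T *\<^sub>v s = \<theta> \<cdot>\<^sub>v s" and z: "V *\<^sub>v s \<noteq> 0\<^sub>v n"
  shows "\<exists>lam. eigenvalue A lam \<and> \<bar>\<theta> - lam\<bar> * vnorm (V *\<^sub>v s) \<le> vnorm (E *\<^sub>v s)"
proof -
  have "A *\<^sub>v (V *\<^sub>v s) = (V * T + E) *\<^sub>v s"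
    using A V s by (simp flip: rec)
  also have "\<dots> = V *\<^sub>v (T *\<^sub>v s) + E *\<^sub>v s"
    using V T E s by (simp add: add_mult_distrib_mat_vec[of _ n M])
  also have "V *\<^sub>v (T *\<^sub>v s) = \<theta> \<cdot>\<^sub>v (V *\<^sub>v s)"
    using V s by (simp add: mult_mat_vec)
  finally have "A *\<^sub>v (V *\<^sub>v s) - \<theta> \<cdot>\<^sub>v (V *\<^sub>v s) = E *\<^sub>v s"
    using V E s by (auto simp: vec_eq_iff)
  then show ?thesis
    using symmetric_exists_eigenvalue_near[OF A _ z, of \<theta>] V s
    by (simp add: abs_minus_commute)
qed

lemma eigenvalue_near_long_ritz_vector:
  fixes A V T E S :: "real mat"
  assumes A: "A \<in> carrier_mat n n" "transpose_mat A = A"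
    and V: "V \<in> carrier_mat n M" and T: "T \<in> carrier_mat M M" and E: "E \<in> carrier_mat n M"
    and rec: "A * V = V * T + E"
    and S: "S \<in> carrier_mat M M" "transpose_mat S * S = 1\<^sub>m M"
    and spec: "T = S * mat M M (\<lambda>(i, j). if i = j then \<theta> i else 0) * transpose_mat S"
    and j: "j < M" and long: "1/2 \<le> vnorm (V *\<^sub>v col S j)"
  shows "\<exists>lam. eigenvalue A lam \<and> \<bar>\<theta> j - lam\<bar> \<le> 2 * spec_norm E"
proof -
  have s: "col S j \<in> carrier_vec M"
    using S j by simp
  have "V *\<^sub>v col S j \<noteq> 0\<^sub>v n"
    using long by auto
  then obtain lam where "eigenvalue A lam"
    and "\<bar>\<theta> j - lam\<bar> * vnorm (V *\<^sub>v col S j) \<le> vnorm (E *\<^sub>v col S j)"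
    using eigenvalue_near_ritz_value[OF A V T E rec s orthogonal_diag_conj_mult_col[OF S spec j]]
    by blast
  moreover have "vnorm (E *\<^sub>v col S j) \<le> spec_norm E"
    using vnorm_mult_mat_vec_le[of "col S j" E] E s vnorm_col_orthogonal[OF S j] by simp
  moreover have "\<bar>\<theta> j - lam\<bar> * (1/2) \<le> \<bar>\<theta> j - lam\<bar> * vnorm (V *\<^sub>v col S j)"
    using long by (intro mult_left_mono) auto
  ultimately show ?thesis
    by auto
qed

lemma blk_off_Suc: "blk_off p (Suc k) = blk_off p k + p k"
  unfolding blk_off_def by simp

lemma blk_off_mono: "k \<le> j \<Longrightarrow> blk_off p k \<le> blk_off p j"
  unfolding blk_off_def by (rule sum_mono2) auto

lemma blk_idx_eqI:
  assumes "blk_off p k \<le> c" "c < blk_off p (Suc k)"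
  shows "blk_idx p c = k"
  unfolding blk_idx_def
proof (rule Least_equality)
  show "c < blk_off p (Suc k)" by fact
next
  fix j assume "c < blk_off p (Suc j)"
  then show "k \<le> j"
    using assms blk_off_mono[of "Suc j" k p] by (meson not_less_eq_eq order.strict_trans2 not_le)
qed

lemma sum_lessThan_add:
  fixes a b :: nat
  shows "(\<Sum>c<a + b. g c) = (\<Sum>c<a. g c) + (\<Sum>i<b. g (a + i))"
  by (induction b) (simp_all add: add.assoc)

lemma sum_lessThan_blk_off: "(\<Sum>c<blk_off p N. g c) = (\<Sum>k<N. \<Sum>i<p k. g (blk_off p k + i))"
  by (induction N) (simp_all add: blk_off_Suc sum_lessThan_add, simp add: blk_off_def)

definition blk_part :: "(nat \<Rightarrow> nat) \<Rightarrow> 'a vec \<Rightarrow> nat \<Rightarrow> 'a vec" where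
  "blk_part p s k = vec (p k) (\<lambda>i. s $ (blk_off p k + i))"

lemma index_blk_concat_mult_vec:
  assumes D: "\<And>k. k < N \<Longrightarrow> D k \<in> carrier_mat n (p k)"
    and r: "r < n" and s: "s \<in> carrier_vec (blk_off p N)"
  shows "(blk_concat n p N D *\<^sub>v s) $ r = (\<Sum>k<N. (D k *\<^sub>v blk_part p s k) $ r)"
proof -
  have "(blk_concat n p N D *\<^sub>v s) $ r = (\<Sum>c<blk_off p N. blk_concat n p N D $$ (r, c) * s $ c)"
    using r s unfolding blk_concat_def by (simp add: scalar_prod_def atLeast0LessThan)
  also have "\<dots> = (\<Sum>k<N. \<Sum>i<p k. blk_concat n p N D $$ (r, blk_off p k + i) * s $ (blk_off p k + i))"
    by (rule sum_lessThan_blk_off)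
  also have "\<dots> = (\<Sum>k<N. \<Sum>i<p k. D k $$ (r, i) * blk_part p s k $ i)"
  proof (intro sum.cong refl)
    fix k i assume k: "k \<in> {..<N}" and i: "i \<in> {..<p k}"
    then have "blk_off p k + i < blk_off p (Suc k)"
      by (simp add: blk_off_Suc)
    moreover have "blk_off p (Suc k) \<le> blk_off p N"
      using k by (intro blk_off_mono) simp
    moreover have "blk_idx p (blk_off p k + i) = k"
      using i by (intro blk_idx_eqI) (auto simp: blk_off_Suc)
    ultimately show "blk_concat n p N D $$ (r, blk_off p k + i) * s $ (blk_off p k + i)
        = D k $$ (r, i) * blk_part p s k $ i"
      using r i unfolding blk_concat_def blk_part_def by simp
  qed
  also have "\<dots> = (\<Sum>k<N. (D k *\<^sub>v blk_part p s k) $ r)"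
  proof (intro sum.cong refl)
    fix k assume "k \<in> {..<N}"
    then show "(\<Sum>i<p k. D k $$ (r, i) * blk_part p s k $ i) = (D k *\<^sub>v blk_part p s k) $ r"
      using D[of k] r by (simp add: scalar_prod_def atLeast0LessThan blk_part_def)
  qed
  finally show ?thesis .
qed

lemma sum_vnorm_blk_part_square:
  assumes "s \<in> carrier_vec (blk_off p N)"
  shows "(\<Sum>k<N. (vnorm (blk_part p s k))\<^sup>2) = (vnorm s)\<^sup>2"
proof -
  have "(\<Sum>k<N. (vnorm (blk_part p s k))\<^sup>2) = (\<Sum>k<N. \<Sum>i<p k. (s $ (blk_off p k + i))\<^sup>2)"
    by (simp add: vnorm_def sum_nonneg blk_part_def)
  also have "\<dots> = (\<Sum>c<blk_off p N. (s $ c)\<^sup>2)"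
    by (rule sum_lessThan_blk_off[symmetric])
  also have "\<dots> = (vnorm s)\<^sup>2"
    using assms by (simp add: vnorm_def sum_nonneg)
  finally show ?thesis .
qed

lemma L2_set_sum_le:
  fixes N :: nat
  shows "L2_set (\<lambda>r. \<Sum>k<N. f k r) A \<le> (\<Sum>k<N. L2_set (f k) A)"
proof (induction N)
  case (Suc N)
  have "L2_set (\<lambda>r. \<Sum>k<Suc N. f k r) A \<le> L2_set (\<lambda>r. \<Sum>k<N. f k r) A + L2_set (f N) A"
    by (simp add: L2_set_triangle_ineq)
  with Suc show ?case
    by simp
qed (simp add: L2_set_def)

lemma vnorm_blk_concat_mult_vec_le:
  assumes D: "\<And>k. k < N \<Longrightarrow> D k \<in> carrier_mat n (p k)"
    and D_norm: "\<And>k. k < N \<Longrightarrow> spec_norm (D k) \<le> c"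
    and s: "s \<in> carrier_vec (blk_off p N)"
  shows "vnorm (blk_concat n p N D *\<^sub>v s) \<le> sqrt (real N) * c * vnorm s"
proof -
  have "blk_concat n p N D \<in> carrier_mat n (blk_off p N)"
    by (simp add: blk_concat_def)
  then have "vnorm (blk_concat n p N D *\<^sub>v s) = L2_set (\<lambda>r. \<Sum>k<N. (D k *\<^sub>v blk_part p s k) $ r) {..<n}"
    unfolding vnorm_L2_set
    by (intro L2_set_cong) (simp_all add: index_blk_concat_mult_vec[OF D _ s] del: index_mult_mat_vec)
  also have "\<dots> \<le> (\<Sum>k<N. L2_set (\<lambda>r. (D k *\<^sub>v blk_part p s k) $ r) {..<n})"
    by (rule L2_set_sum_le)
  also have "\<dots> = (\<Sum>k<N. vnorm (D k *\<^sub>v blk_part p s k))"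
    using D by (intro sum.cong refl) (auto simp: vnorm_L2_set)
  also have "\<dots> \<le> (\<Sum>k<N. c * vnorm (blk_part p s k))"
  proof (intro sum_mono)
    fix k assume k: "k \<in> {..<N}"
    then have "vnorm (D k *\<^sub>v blk_part p s k) \<le> spec_norm (D k) * vnorm (blk_part p s k)"
      using D[of k] by (intro vnorm_mult_mat_vec_le) (auto simp: blk_part_def)
    also have "\<dots> \<le> c * vnorm (blk_part p s k)"
      using D_norm[of k] k by (intro mult_right_mono) auto
    finally show "vnorm (D k *\<^sub>v blk_part p s k) \<le> c * vnorm (blk_part p s k)" .
  qed
  also have "\<dots> \<le> c * (L2_set (\<lambda>k. vnorm (blk_part p s k)) {..<N} * L2_set (\<lambda>k. 1) {..<N})"
  proof (cases "N = 0")
    case False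
    then have "c \<ge> 0"
      using D_norm[of 0] spec_norm_nonneg[of "D 0"] by linarith
    then show ?thesis
      using L2_set_mult_ineq[of "\<lambda>k. vnorm (blk_part p s k)" "\<lambda>k. 1" "{..<N}"]
      by (simp add: mult_left_mono flip: sum_distrib_left)
  qed simp
  also have "L2_set (\<lambda>k. vnorm (blk_part p s k)) {..<N} = vnorm s"
    using sum_vnorm_blk_part_square[OF s] unfolding L2_set_def by simp
  finally show ?thesis
    by (simp add: L2_set_constant algebra_simps)
qed

lemma spec_norm_blk_concat_le:
  assumes D: "\<And>k. k < N \<Longrightarrow> D k \<in> carrier_mat n (p k)"
    and D_norm: "\<And>k. k < N \<Longrightarrow> spec_norm (D k) \<le> c"
  shows "spec_norm (blk_concat n p N D) \<le> sqrt (real N) * c"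
proof (rule spec_norm_le)
  have "0 \<le> sqrt (real N) * c"
    using D_norm[of 0] spec_norm_nonneg[of "D 0"] by (cases "N = 0") auto
  fix x assume x: "x \<in> carrier_vec (dim_col (blk_concat n p N D))" "vnorm x \<le> 1"
  then have "vnorm (blk_concat n p N D *\<^sub>v x) \<le> sqrt (real N) * c * vnorm x"
    by (intro vnorm_blk_concat_mult_vec_le) (use D D_norm in \<open>auto simp: blk_concat_def\<close>)
  also have "\<dots> \<le> sqrt (real N) * c"
    using x \<open>0 \<le> sqrt (real N) * c\<close> by (intro mult_left_le) auto
  finally show "vnorm (blk_concat n p N D *\<^sub>v x) \<le> sqrt (real N) * c" .
qed

theorem theorem2:
  fixes n N :: nat and p :: "nat \<Rightarrow> nat"
    and A V T S E :: "real mat" and D :: "nat \<Rightarrow> real mat"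
    and \<theta> :: "nat \<Rightarrow> real" and \<epsilon>\<^sub>1 \<epsilon>\<^sub>2 :: real
  defines "M \<equiv> blk_off p N"
  assumes A: "A \<in> carrier_mat n n" "transpose_mat A = A"
    and V: "V \<in> carrier_mat n M"
    and T: "T \<in> carrier_mat M M" "transpose_mat T = T" "block_tridiag p N T"
    and D: "\<And>j. j < N \<Longrightarrow> D j \<in> carrier_mat n (p j)"
    and rec: "A * V = V * T + blk_concat n p N D"
    and eps2: "\<epsilon>\<^sub>2 > 0" "\<And>j. j < N \<Longrightarrow> spec_norm (D j) \<le> \<epsilon>\<^sub>2 * spec_norm A"
    and S: "S \<in> carrier_mat M M" "transpose_mat S * S = 1\<^sub>m M"
    and spec: "T = S * mat M M (\<lambda>(i, j). if i = j then \<theta> i else 0) * transpose_mat S"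
    and eps1: "\<epsilon>\<^sub>1 > 0"
    and ritz: "\<And>i. i < M \<Longrightarrow> vnorm (V *\<^sub>v col S i) < 1/2 \<Longrightarrow>
       (\<exists>j < M. vnorm (V *\<^sub>v col S j) \<ge> 1/2 \<and> \<bar>\<theta> i - \<theta> j\<bar> \<le> \<epsilon>\<^sub>1 * spec_norm A)"
  shows "\<forall>\<mu>. eigenvalue T \<mu> \<longrightarrow>
    (\<exists>lam. eigenvalue A lam \<and> \<bar>\<mu> - lam\<bar> \<le> 3 * max (sqrt (real N) * \<epsilon>\<^sub>2) \<epsilon>\<^sub>1 * spec_norm A)"
proof (intro allI impI)
  fix \<mu> assume "eigenvalue T \<mu>"
  then obtain i where i: "i < M" and \<mu>: "\<mu> = \<theta> i"
    using orthogonal_diag_conj_eigenvalue[OF S spec] by blast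
  define \<delta> where "\<delta> = sqrt (real N) * \<epsilon>\<^sub>2 * spec_norm A"
  have "spec_norm (blk_concat n p N D) \<le> \<delta>"
    unfolding \<delta>_def using spec_norm_blk_concat_le[OF D eps2(2)] by (simp add: mult.assoc)
  then have near: "\<exists>lam. eigenvalue A lam \<and> \<bar>\<theta> j - lam\<bar> \<le> 2 * \<delta>"
    if "j < M" "1/2 \<le> vnorm (V *\<^sub>v col S j)" for j
    using eigenvalue_near_long_ritz_vector[OF A V T(1) _ rec S spec that]
    by (fastforce simp: M_def blk_concat_def)
  have "\<exists>lam. eigenvalue A lam \<and> \<bar>\<mu> - lam\<bar> \<le> \<epsilon>\<^sub>1 * spec_norm A + 2 * \<delta>"
  proof (cases "1/2 \<le> vnorm (V *\<^sub>v col S i)")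
    case True
    have "0 \<le> \<epsilon>\<^sub>1 * spec_norm A"
      using eps1 spec_norm_nonneg[of A] by simp
    then show ?thesis
      using near[OF i True] \<mu> by force
  next
    case False
    then obtain j where "j < M" "1/2 \<le> vnorm (V *\<^sub>v col S j)" "\<bar>\<theta> i - \<theta> j\<bar> \<le> \<epsilon>\<^sub>1 * spec_norm A"
      using ritz[OF i] by force
    then show ?thesis
      using near \<mu> by force
  qed
  then obtain lam where "eigenvalue A lam" "\<bar>\<mu> - lam\<bar> \<le> \<epsilon>\<^sub>1 * spec_norm A + 2 * \<delta>"
    by blast
  moreover have "\<epsilon>\<^sub>1 * spec_norm A \<le> max (sqrt (real N) * \<epsilon>\<^sub>2) \<epsilon>\<^sub>1 * spec_norm A"
    and "\<delta> \<le> max (sqrt (real N) * \<epsilon>\<^sub>2) \<epsilon>\<^sub>1 * spec_norm A"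
    unfolding \<delta>_def using spec_norm_nonneg[of A] by (simp_all add: mult_right_mono)
  ultimately show "\<exists>lam. eigenvalue A lam \<and> \<bar>\<mu> - lam\<bar> \<le> 3 * max (sqrt (real N) * \<epsilon>\<^sub>2) \<epsilon>\<^sub>1 * spec_norm A"
    by (intro exI[of _ lam]) auto
qed

end
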